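(* Let $D\ge1$ and $p\ge1$ be integers, let $h>0$, let $Q\subset\mathbb{R}^D$ and $R\subset\mathbb{R}^D$ be finite sets (query and reference points), and let $c_Q,c_R\in\mathbb{R}^D$. For multi-indices $\alpha<p$ define the far-field moments $$M_\alpha=\sum_{r\in R}\frac{1}{\alpha!}\left(\frac{r-c_R}{\sqrt{2h^2}}\right)^{\alpha},$$ and for multi-indices $\beta<p$ define the translated local moments $$L_\beta=\frac{(-1)^{|\beta|}}{\beta!}\sum_{\alpha<p}M_\alpha\,h_{\alpha+\beta}\!\left(\frac{c_Q-c_R}{\sqrt{2h^2}}\right).$$ For $q\in\mathbb{R}^D$ let $$\widetilde G(q)=\sum_{\beta<p}L_\beta\left(\frac{q-c_Q}{\sqrt{2h^2}}\right)^{\beta},\qquad G(q)=\sum_{r\in R}e^{-\|q-r\|^2/(2h^2)}.$$ Suppose there is $r_0$ with $0\le r_0<\tfrac12$ such that $\|q-c_Q\|_\infty<r_0h$ for all $q\in Q$ and $\|r-c_R\|_\infty<r_0h$ for all $r\in R$. Then for every $q\in Q$, $$\bigl|\widetilde G(q)-G(q)\bigr|\le\frac{|R|}{(1-2r_0)^{2D}}\sum_{k=0}^{D-1}\binom{D}{k}\bigl((1-(2r_0)^p)^2\bigr)^k\left(\frac{(2r_0)^p\,(2-(2r_0)^p)}{\sqrt{p!}}\right)^{D-k}.$$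
   Context: Hermite polynomials: $H_n(t)=(-1)^n e^{t^2}\frac{d^n}{dt^n}e^{-t^2}$ for $t\in\mathbb{R}$; Hermite functions: $h_n(t)=e^{-t^2}H_n(t)$. For a $D$-dimensional multi-index $\alpha=(\alpha[1],\dots,\alpha[D])$ of non-negative integers and $t\in\mathbb{R}^D$: $h_\alpha(t)=\prod_{d=1}^D h_{\alpha[d]}(t[d])$, $|\alpha|=\sum_d\alpha[d]$, $\alpha!=\prod_d\alpha[d]!$, $t^\alpha=\prod_d t[d]^{\alpha[d]}$, and $\alpha+\beta$ is componentwise addition. For an integer $p$, "$\alpha<p$" means $\alpha[d]<p$ for every $d$. $\|\cdot\|$ is the Euclidean norm, $\|\cdot\|_\infty$ the max norm, $|R|$ the number of points in $R$. *)

theory Defs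
  imports "HOL-Analysis.Analysis"
begin

text \<open>Points of R^D are represented as functions nat => real, only coordinates d < D matter.
Multi-indices are functions nat => nat, only entries d < D matter.\<close>

definition hermite_poly :: "nat \<Rightarrow> real \<Rightarrow> real" where
  "hermite_poly n t = (-1)^n * exp (t^2) * ((deriv ^^ n) (\<lambda>s. exp (- (s^2))) t)"

definition hermite_fun :: "nat \<Rightarrow> real \<Rightarrow> real" where
  "hermite_fun n t = exp (- (t^2)) * hermite_poly n t"

definition mhermite :: "nat \<Rightarrow> (nat \<Rightarrow> nat) \<Rightarrow> (nat \<Rightarrow> real) \<Rightarrow> real" where
  "mhermite D \<alpha> t = (\<Prod>d<D. hermite_fun (\<alpha> d) (t d))"

definition mabs :: "nat \<Rightarrow> (nat \<Rightarrow> nat) \<Rightarrow> nat" where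
  "mabs D \<alpha> = (\<Sum>d<D. \<alpha> d)"

definition mfact :: "nat \<Rightarrow> (nat \<Rightarrow> nat) \<Rightarrow> nat" where
  "mfact D \<alpha> = (\<Prod>d<D. fact (\<alpha> d))"

definition mpow :: "nat \<Rightarrow> (nat \<Rightarrow> real) \<Rightarrow> (nat \<Rightarrow> nat) \<Rightarrow> real" where
  "mpow D t \<alpha> = (\<Prod>d<D. (t d) ^ (\<alpha> d))"

definition multi_lt :: "nat \<Rightarrow> nat \<Rightarrow> (nat \<Rightarrow> nat) set" where
  "multi_lt D p = {\<alpha>. (\<forall>d<D. \<alpha> d < p) \<and> (\<forall>d\<ge>D. \<alpha> d = 0)}"

definition eucl_norm :: "nat \<Rightarrow> (nat \<Rightarrow> real) \<Rightarrow> real" where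
  "eucl_norm D x = sqrt (\<Sum>d<D. (x d)^2)"

definition max_norm :: "nat \<Rightarrow> (nat \<Rightarrow> real) \<Rightarrow> real" where
  "max_norm D x = Max ((\<lambda>d. \<bar>x d\<bar>) ` {..<D})"

definition scaled :: "real \<Rightarrow> (nat \<Rightarrow> real) \<Rightarrow> (nat \<Rightarrow> real) \<Rightarrow> (nat \<Rightarrow> real)" where
  "scaled h x c = (\<lambda>d. (x d - c d) / sqrt (2 * h^2))"

definition farfield_moment ::
  "nat \<Rightarrow> real \<Rightarrow> (nat \<Rightarrow> real) set \<Rightarrow> (nat \<Rightarrow> real) \<Rightarrow> (nat \<Rightarrow> nat) \<Rightarrow> real" where
  "farfield_moment D h R cR \<alpha> =
     (\<Sum>r\<in>R. (1 / real (mfact D \<alpha>)) * mpow D (scaled h r cR) \<alpha>)"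

definition local_moment ::
  "nat \<Rightarrow> nat \<Rightarrow> real \<Rightarrow> (nat \<Rightarrow> real) set \<Rightarrow> (nat \<Rightarrow> real) \<Rightarrow> (nat \<Rightarrow> real)
     \<Rightarrow> (nat \<Rightarrow> nat) \<Rightarrow> real" where
  "local_moment D p h R cR cQ \<beta> =
     ((-1) ^ mabs D \<beta> / real (mfact D \<beta>)) *
     (\<Sum>\<alpha>\<in>multi_lt D p. farfield_moment D h R cR \<alpha> *
         mhermite D (\<lambda>d. \<alpha> d + \<beta> d) (scaled h cQ cR))"

definition G_approx ::
  "nat \<Rightarrow> nat \<Rightarrow> real \<Rightarrow> (nat \<Rightarrow> real) set \<Rightarrow> (nat \<Rightarrow> real) \<Rightarrow> (nat \<Rightarrow> real)
     \<Rightarrow> (nat \<Rightarrow> real) \<Rightarrow> real" where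
  "G_approx D p h R cR cQ q =
     (\<Sum>\<beta>\<in>multi_lt D p. local_moment D p h R cR cQ \<beta> * mpow D (scaled h q cQ) \<beta>)"

definition G_exact ::
  "nat \<Rightarrow> real \<Rightarrow> (nat \<Rightarrow> real) set \<Rightarrow> (nat \<Rightarrow> real) \<Rightarrow> real" where
  "G_exact D h R q = (\<Sum>r\<in>R. exp (- ((eucl_norm D (\<lambda>d. q d - r d))^2) / (2 * h^2)))"

end

theory Submission
  imports Defs
begin

text \<open>The approximation factorizes over coordinates: for a reference point r,
  both exp(-|q - r|^2 / 2h^2) and its truncated Hermite expansion are products over the D
  coordinates of one-dimensional functions of c = (cQ - cR)/sqrt(2h^2), x = (q - cQ)/sqrt(2h^2)
  and y = (r - cR)/sqrt(2h^2).  In one dimension exp(-(c + (x - y))^2) is the Taylor series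
  sum_m (-1)^m h_m(c) (x - y)^m / m!, which expands binomially into a double series in y^a and
  x^b; the approximation keeps a, b < p.  The uniform bound h_n(t)^2 <= 4^n n! (proved from the
  explicit formula for H_n and Cauchy-Schwarz) shows that the double series is dominated by
  (2 r0)^(a+b) / sqrt(a! b!), giving a bound A for the truncation and B for its error.  A
  telescoping argument turns these into (A + B)^D - A^D per reference point, which is the
  closed form of the theorem.\<close>

definition hermite_coeff :: "nat \<Rightarrow> nat \<Rightarrow> real" where
  "hermite_coeff n k = (if 2*k \<le> n then (-1)^k * fact n / (fact k * fact (n - 2*k)) else 0)"

definition hermite_expl :: "nat \<Rightarrow> real \<Rightarrow> real" where
  "hermite_expl n t = (\<Sum>k\<le>n. hermite_coeff n k * (2*t)^(n-2*k))"

lemma hermite_expl_0[simp]: "hermite_expl 0 t = 1"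
  by (simp add: hermite_expl_def hermite_coeff_def)

lemma hermite_coeff_deriv: "hermite_coeff (Suc n) k * real (Suc n - 2*k) = real (Suc n) * hermite_coeff n k"
proof (cases "2*k \<le> n")
  case True
  define i where "i = n - 2*k"
  have a: "Suc n - 2*k = Suc i" "n - 2*k = i" using True by (auto simp: i_def)
  have f1: "(fact (Suc n)::real) = real (Suc n) * fact n" by simp
  have f2: "(fact (Suc i)::real) = real (Suc i) * fact i" by simp
  have "hermite_coeff (Suc n) k * real (Suc n - 2*k) = (-1)^k * (real (Suc n) * fact n) / (fact k * (real (Suc i) * fact i)) * real (Suc i)"
    using True unfolding hermite_coeff_def a f1[symmetric] f2[symmetric] by simp
  also have "\<dots> = real (Suc n) * ((-1)^k * fact n / (fact k * fact i))"
    by (simp add: field_simps del: of_nat_Suc)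
  also have "\<dots> = real (Suc n) * hermite_coeff n k" using True by (simp add: hermite_coeff_def a)
  finally show ?thesis .
next
  case False
  then show ?thesis by (auto simp: hermite_coeff_def)
qed

lemma hermite_expl_deriv: "DERIV (hermite_expl n) t :> 2 * real n * hermite_expl (n - 1) t"
proof (cases n)
  case 0
  have "hermite_expl n = (\<lambda>_. 1)" using 0 by (auto simp: hermite_expl_def hermite_coeff_def)
  then show ?thesis using 0 by simp
next
  case (Suc m)
  have d: "DERIV (hermite_expl n) t :> (\<Sum>k\<le>n. real (n - 2 * k) * t ^ (n - Suc (2 * k)) * 2 ^ (n - 2 * k) * hermite_coeff n k)"
    unfolding hermite_expl_def[abs_def] power_mult_distrib
    by (auto intro!: derivative_eq_intros simp: algebra_simps)
  have "(\<Sum>k\<le>n. real (n - 2 * k) * t ^ (n - Suc (2 * k)) * 2 ^ (n - 2 * k) * hermite_coeff n k)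
      = (\<Sum>k\<le>m. real (n - 2 * k) * t ^ (n - Suc (2 * k)) * 2 ^ (n - 2 * k) * hermite_coeff n k)"
    using Suc by (simp add: hermite_coeff_def)
  also have "\<dots> = (\<Sum>k\<le>m. 2 * real n * (hermite_coeff m k * (2*t)^(m - 2*k)))"
  proof (rule sum.cong[OF refl])
    fix k assume "k \<in> {..m}"
    show "real (n - 2 * k) * t ^ (n - Suc (2 * k)) * 2 ^ (n - 2 * k) * hermite_coeff n k = 2 * real n * (hermite_coeff m k * (2*t)^(m - 2*k))"
    proof (cases "2*k \<le> m")
      case True
      have e: "n - Suc (2*k) = m - 2*k" "n - 2*k = Suc (m - 2*k)" using Suc True by auto
      have e2: "Suc m - 2*k = Suc (m - 2*k)" using True by auto
      have c: "hermite_coeff n k * real (Suc (m - 2*k)) = real n * hermite_coeff m k"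
        using hermite_coeff_deriv[of m k] Suc unfolding e2 by simp
      have "real (n - 2 * k) * t ^ (n - Suc (2 * k)) * 2 ^ (n - 2 * k) * hermite_coeff n k
          = 2 * (2*t)^(m-2*k) * (hermite_coeff n k * real (Suc (m - 2*k)))"
        unfolding e by (simp only: power_mult_distrib power_Suc mult_ac)
      also have "\<dots> = 2 * real n * (hermite_coeff m k * (2*t)^(m - 2*k))" unfolding c by (simp only: mult_ac)
      finally show ?thesis .
    next
      case False
      then show ?thesis using Suc by (auto simp: hermite_coeff_def)
    qed
  qed
  also have "\<dots> = 2 * real n * hermite_expl (n - 1) t"
    using Suc by (simp add: hermite_expl_def sum_distrib_left)
  finally show ?thesis using d by simp
qed

lemma hermite_coeff_rec: "hermite_coeff (Suc (Suc n)) (Suc j) = hermite_coeff (Suc n) (Suc j) - 2 * real (Suc n) * hermite_coeff n j"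
proof (cases "2*j \<le> n")
  case True
  define i where "i = n - 2*j"
  have ni: "n = 2*j + i" using True by (simp add: i_def)
  have F: "(fact (Suc (Suc n))::real) = real (Suc (Suc n)) * (real (Suc n) * fact n)"
          "(fact (Suc j)::real) = real (Suc j) * fact j" by simp_all
  show ?thesis
  proof (cases i)
    case 0
    have a: "Suc (Suc n) - 2 * Suc j = 0" "n - 2*j = 0" "\<not> 2 * Suc j \<le> Suc n" using ni 0 by auto
    have "hermite_coeff (Suc (Suc n)) (Suc j) = (-1)^(Suc j) * (real (Suc (Suc n)) * (real (Suc n) * fact n)) / (real (Suc j) * fact j)"
      unfolding hermite_coeff_def a F[symmetric] using ni 0 by simp
    also have "\<dots> = (-1)^(Suc j) * (2 * real (Suc j) * (real (Suc n) * fact n)) / (real (Suc j) * fact j)"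
      using ni 0 by simp
    also have "\<dots> = 0 - 2 * real (Suc n) * ((-1)^j * fact n / (fact j))"
      by (simp add: field_simps del: of_nat_Suc)
    also have "\<dots> = hermite_coeff (Suc n) (Suc j) - 2 * real (Suc n) * hermite_coeff n j"
      using True a by (simp add: hermite_coeff_def)
    finally show ?thesis .
  next
    case (Suc l)
    have a: "Suc (Suc n) - 2 * Suc j = Suc l" "Suc n - 2 * Suc j = l" "n - 2*j = Suc l"
      "2 * Suc j \<le> Suc n" "2 * Suc j \<le> Suc (Suc n)" using ni Suc by auto
    have G: "(fact (Suc n)::real) = real (Suc n) * fact n" "(fact (Suc l)::real) = real (Suc l) * fact l" by simp_all
    have nr: "real n = 2 * real j + real l + 1" using ni Suc by simp
    have "hermite_coeff (Suc (Suc n)) (Suc j) = (-1)^(Suc j) * (real (Suc (Suc n)) * (real (Suc n) * fact n)) / ((real (Suc j) * fact j) * (real (Suc l) * fact l))"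
      unfolding hermite_coeff_def a F[symmetric] G[symmetric] using a by simp
    also have "\<dots> = (-1)^(Suc j) * ((real (Suc l) + 2 * real (Suc j)) * (real (Suc n) * fact n)) / ((real (Suc j) * fact j) * (real (Suc l) * fact l))"
      using nr by simp
    also have "\<dots> = (-1)^(Suc j) * (real (Suc n) * fact n) / ((real (Suc j) * fact j) * fact l) - 2 * real (Suc n) * ((-1)^j * fact n / (fact j * (real (Suc l) * fact l)))"
      by (simp add: field_simps del: of_nat_Suc)
    also have "\<dots> = hermite_coeff (Suc n) (Suc j) - 2 * real (Suc n) * hermite_coeff n j"
      unfolding hermite_coeff_def a F[symmetric] G[symmetric] using a True by simp
    finally show ?thesis .
  qed
next
  case False
  then show ?thesis by (auto simp: hermite_coeff_def)
qed

lemma hermite_expl_rec: "hermite_expl (Suc n) t = 2*t*hermite_expl n t - 2 * real n * hermite_expl (n-1) t"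
proof (cases n)
  case 0
  then show ?thesis by (simp add: hermite_expl_def hermite_coeff_def)
next
  case (Suc m)
  have e1: "hermite_expl (Suc n) t = hermite_coeff (Suc n) 0 * (2*t)^(Suc n) + (\<Sum>j\<le>m. hermite_coeff (Suc n) (Suc j) * (2*t)^(m - 2*j))"
  proof -
    have "hermite_expl (Suc n) t = hermite_coeff (Suc n) 0 * (2*t)^(Suc n) + (\<Sum>j\<le>n. hermite_coeff (Suc n) (Suc j) * (2*t)^(Suc n - 2*Suc j))"
      unfolding hermite_expl_def by (subst sum.atMost_Suc_shift) simp
    also have "(\<Sum>j\<le>n. hermite_coeff (Suc n) (Suc j) * (2*t)^(Suc n - 2*Suc j)) = (\<Sum>j\<le>m. hermite_coeff (Suc n) (Suc j) * (2*t)^(m - 2*j))"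
      using Suc by (simp add: hermite_coeff_def)
    finally show ?thesis .
  qed
  have e2: "2*t*hermite_expl n t = hermite_coeff n 0 * (2*t)^(Suc n) + (\<Sum>j\<le>m. hermite_coeff n (Suc j) * (2*t)^(m - 2*j))"
  proof -
    have "2*t*hermite_expl n t = (\<Sum>k\<le>n. hermite_coeff n k * (2*t)^(Suc n-2*k))"
      unfolding hermite_expl_def sum_distrib_left
      by (rule sum.cong) (auto simp: hermite_coeff_def Suc_diff_le)
    also have "\<dots> = (\<Sum>k\<le>Suc m. hermite_coeff n k * (2*t)^(Suc n-2*k))" using Suc by simp
    also have "\<dots> = hermite_coeff n 0 * (2*t)^(Suc n) + (\<Sum>j\<le>m. hermite_coeff n (Suc j) * (2*t)^(Suc n - 2*Suc j))"
      by (subst sum.atMost_Suc_shift) simp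
    also have "(\<Sum>j\<le>m. hermite_coeff n (Suc j) * (2*t)^(Suc n - 2*Suc j)) = (\<Sum>j\<le>m. hermite_coeff n (Suc j) * (2*t)^(m - 2*j))"
      using Suc by simp
    finally show ?thesis .
  qed
  have e3: "(\<Sum>j\<le>m. hermite_coeff (Suc n) (Suc j) * (2*t)^(m - 2*j)) = (\<Sum>j\<le>m. hermite_coeff n (Suc j) * (2*t)^(m - 2*j)) - 2 * real n * hermite_expl m t"
    unfolding hermite_expl_def sum_distrib_left sum_subtractf[symmetric]
    using Suc by (intro sum.cong) (auto simp: hermite_coeff_rec algebra_simps)
  have e4: "hermite_coeff (Suc n) 0 = hermite_coeff n 0" by (simp add: hermite_coeff_def)
  show ?thesis using e1 e2 e3 e4 Suc by simp
qed

text \<open>Differentiating e^(-s^2) H_n(s) gives -e^(-s^2) H_(n+1)(s); this one identity yields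
  both Rodrigues' formula and the derivative of the Hermite functions.\<close>
lemma gauss_hermite_deriv:
  "DERIV (\<lambda>s. exp (- (s^2)) * hermite_expl n s) t :> - (exp (- (t^2)) * hermite_expl (Suc n) t)"
proof -
  have "DERIV (\<lambda>s. exp (- (s^2)) * hermite_expl n s) t :>
     exp (- (t^2)) * (- (2 * t)) * hermite_expl n t + exp (- (t^2)) * (2 * real n * hermite_expl (n - 1) t)"
    by (auto intro!: derivative_eq_intros hermite_expl_deriv simp: algebra_simps)
  moreover have "exp (- (t^2)) * (- (2 * t)) * hermite_expl n t
      + exp (- (t^2)) * (2 * real n * hermite_expl (n - 1) t) = - (exp (- (t^2)) * hermite_expl (Suc n) t)"
    unfolding hermite_expl_rec by (simp add: algebra_simps)
  ultimately show ?thesis by simp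
qed

lemma gauss_deriv_iter:
  "(deriv ^^ n) (\<lambda>s. exp (- (s^2))) = (\<lambda>s. (-1)^n * (exp (- (s^2)) * hermite_expl n s))"
proof (induction n)
  case 0
  show ?case by simp
next
  case (Suc n)
  have step: "deriv (\<lambda>s. (-1)^n * (exp (- (s^2)) * hermite_expl n s)) t
      = (-1)^Suc n * (exp (- (t^2)) * hermite_expl (Suc n) t)" for t
    using DERIV_imp_deriv[OF DERIV_cmult[OF gauss_hermite_deriv, of "(-1)^n"]] by simp
  have "(deriv ^^ Suc n) (\<lambda>s. exp (- (s^2))) = deriv (\<lambda>s. (-1)^n * (exp (- (s^2)) * hermite_expl n s))"
    using Suc.IH by simp
  then show ?case by (simp only: step)
qed

lemma hermite_poly_expl: "hermite_poly n t = hermite_expl n t"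
proof -
  have "hermite_poly n t = ((-1)^n * (-1)^n) * (exp (t^2) * exp (- (t^2))) * hermite_expl n t"
    unfolding hermite_poly_def gauss_deriv_iter by (simp add: algebra_simps)
  also have "\<dots> = hermite_expl n t"
    by (simp add: exp_minus_inverse power_mult_distrib[symmetric])
  finally show ?thesis .
qed

lemma hermite_fun_expl: "hermite_fun n t = exp (- (t^2)) * hermite_expl n t"
  by (simp add: hermite_fun_def hermite_poly_expl)

lemma hermite_fun_0: "hermite_fun 0 t = exp (- (t^2))"
  by (simp add: hermite_fun_expl)

lemma hermite_fun_deriv: "DERIV (hermite_fun n) t :> - hermite_fun (Suc n) t"
  unfolding hermite_fun_expl[abs_def] using gauss_hermite_deriv by simp

lemma fact_split:
  assumes "2*k \<le> n"
  shows "(fact n :: real) = fact k * fact k * fact (n - 2*k) * real (n choose (2*k)) * real ((2*k) choose k)"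
proof -
  have row: "fact (2*k) * fact (n - 2*k) * (n choose (2*k)) = fact n"
    using binomial_fact_lemma[OF assms] .
  have mid: "fact k * fact k * ((2*k) choose k) = fact (2*k)"
    using binomial_fact_lemma[of k "2*k"] by simp
  have "fact n = fact k * fact k * ((2*k) choose k) * fact (n - 2*k) * (n choose (2*k))"
    by (simp only: mid row)
  then have "(fact n :: real) = of_nat (fact k * fact k * ((2*k) choose k) * fact (n - 2*k) * (n choose (2*k)))"
    by (metis of_nat_fact)
  then show ?thesis by (simp add: mult_ac)
qed

lemma sum_choose_even: "(\<Sum>k\<le>n div 2. real (n choose (2*k))) \<le> 2^n"
proof -
  have "(\<Sum>k\<le>n div 2. real (n choose (2*k))) = (\<Sum>i\<in>(\<lambda>k. 2*k) ` {..n div 2}. real (n choose i))"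
    by (subst sum.reindex) (auto simp: inj_on_def)
  also have "\<dots> \<le> (\<Sum>i\<le>n. real (n choose i))"
    by (rule sum_mono2) auto
  also have "\<dots> = 2^n" using choose_row_sum[of n] by (metis of_nat_numeral of_nat_power of_nat_sum)
  finally show ?thesis .
qed

lemma exp_partial_le: "0 \<le> x \<Longrightarrow> (\<Sum>j<N. x^j / fact j) \<le> exp (x::real)"
proof -
  assume x: "0 \<le> x"
  have "(\<lambda>j. x^j /\<^sub>R fact j) sums exp x" by (rule exp_converges)
  then have s: "(\<lambda>j. x^j / fact j) sums exp x" by (simp add: divide_inverse_commute scaleR_conv_of_real)
  show ?thesis
    using sum_le_suminf[OF sums_summable[OF s], of "{..<N}"] x sums_unique[OF s] by auto
qed

text \<open>Weighted size of a single Hermite coefficient; the weight 2^(n-2k) (n-2k)! is what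
  Cauchy-Schwarz pairs it with below.\<close>
lemma hermite_coeff_weighted_sq:
  assumes k2: "2*k \<le> n"
  shows "(hermite_coeff n k)^2 * (2^(n - 2*k) * fact (n - 2*k)) \<le> fact n * 2^n * real (n choose (2*k))"
proof -
  have fs: "(fact n :: real) = fact k * fact k * fact (n - 2*k) * real (n choose (2*k)) * real ((2*k) choose k)"
    using fact_split[OF k2] .
  have central: "real ((2*k) choose k) \<le> 2^(2*k)"
    using binomial_le_pow2[of "2*k" k] by (metis of_nat_le_iff of_nat_numeral of_nat_power)
  have pw: "(2::real)^(2*k) * 2^(n - 2*k) = 2^n" using k2 by (simp flip: power_add)
  have "(hermite_coeff n k)^2 = (fact n)^2 / (fact k * fact (n - 2*k))^2"
    using k2 by (simp add: hermite_coeff_def power_mult_distrib power_divide power_even_eq[symmetric] flip: power_mult)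
  then have "(hermite_coeff n k)^2 * (2^(n - 2*k) * fact (n - 2*k))
      = fact n * (fact n / (fact k * fact k * fact (n - 2*k))) * 2^(n - 2*k)"
    by (simp add: power2_eq_square)
  also have "fact n / (fact k * fact k * fact (n - 2*k)) = real (n choose (2*k)) * real ((2*k) choose k)"
    by (subst fs) simp
  also have "fact n * (real (n choose (2*k)) * real ((2*k) choose k)) * 2^(n - 2*k)
       \<le> fact n * (real (n choose (2*k)) * 2^(2*k)) * 2^(n - 2*k)"
    using central by (intro mult_right_mono mult_left_mono) auto
  also have "\<dots> = fact n * 2^n * real (n choose (2*k))"
    using pw by (simp add: algebra_simps)
  finally show ?thesis .
qed

lemma hermite_coeff_sq_sum:
  "(\<Sum>k\<le>n div 2. (hermite_coeff n k)^2 * (2^(n - 2*k) * fact (n - 2*k))) \<le> 4^n * fact n"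
proof -
  have "(\<Sum>k\<le>n div 2. (hermite_coeff n k)^2 * (2^(n - 2*k) * fact (n - 2*k)))
      \<le> (\<Sum>k\<le>n div 2. fact n * 2^n * real (n choose (2*k)))"
    using hermite_coeff_weighted_sq by (intro sum_mono) auto
  also have "\<dots> \<le> fact n * 2^n * 2^n"
    using sum_choose_even[of n] unfolding sum_distrib_left[symmetric] by (intro mult_left_mono) auto
  also have "\<dots> = 4^n * fact n" by (simp add: power_mult_distrib[symmetric])
  finally show ?thesis .
qed

text \<open>A Cramer-type bound H_n(t)^2 <= e^(2t^2) 4^n n!, via Cauchy-Schwarz on the explicit
  formula: one factor is bounded by the exponential series of 2t^2, the other by the
  coefficient estimate above.\<close>
lemma hermite_expl_sq_bound: "(hermite_expl n t)^2 \<le> exp (2 * t^2) * (4^n * fact n)"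
proof -
  define K where "K = {..n div 2}"
  have K2: "k \<in> K \<longleftrightarrow> 2*k \<le> n" for k by (auto simp: K_def)
  define a where "a k = sqrt ((2 * t^2)^(n - 2*k) / fact (n - 2*k))" for k
  define b where "b k = \<bar>hermite_coeff n k\<bar> * sqrt (2^(n - 2*k) * fact (n - 2*k))" for k
  have "hermite_expl n t = (\<Sum>k\<in>K. hermite_coeff n k * (2*t)^(n-2*k))"
    unfolding hermite_expl_def by (rule sum.mono_neutral_right) (auto simp: K_def hermite_coeff_def)
  then have "\<bar>hermite_expl n t\<bar> \<le> (\<Sum>k\<in>K. \<bar>hermite_coeff n k\<bar> * \<bar>2*t\<bar>^(n-2*k))"
    by (auto intro: order_trans[OF sum_abs] simp: abs_mult power_abs)
  also have "\<dots> = (\<Sum>k\<in>K. a k * b k)"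
  proof (rule sum.cong[OF refl])
    fix k
    have "(2 * t^2)^(n - 2*k) / fact (n - 2*k) * (2^(n - 2*k) * fact (n - 2*k)) = (\<bar>2*t\<bar>^(n-2*k))^2"
    proof -
      have "(2 * t^2)^(n - 2*k) / fact (n - 2*k) * (2^(n - 2*k) * fact (n - 2*k))
          = (2 * t^2)^(n - 2*k) * 2^(n - 2*k)" by simp
      also have "\<dots> = (\<bar>2*t\<bar>^2)^(n - 2*k)"
        by (simp add: power_mult_distrib[symmetric] power2_abs power2_eq_square mult_ac)
      also have "\<dots> = (\<bar>2*t\<bar>^(n-2*k))^2" by (simp only: power_mult[symmetric] mult.commute)
      finally show ?thesis .
    qed
    then show "\<bar>hermite_coeff n k\<bar> * \<bar>2*t\<bar>^(n-2*k) = a k * b k"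
      unfolding a_def b_def by (simp add: real_sqrt_mult[symmetric] mult_ac)
  qed
  finally have H: "\<bar>hermite_expl n t\<bar> \<le> (\<Sum>k\<in>K. a k * b k)" .
  have "(hermite_expl n t)^2 \<le> (\<Sum>k\<in>K. a k * b k)^2"
    using H by (metis abs_ge_zero power2_abs power_mono)
  also have "\<dots> \<le> (\<Sum>k\<in>K. (a k)^2) * (\<Sum>k\<in>K. (b k)^2)" by (rule Cauchy_Schwarz_ineq_sum)
  also have "\<dots> \<le> exp (2 * t^2) * (4^n * fact n)"
  proof (rule mult_mono)
    have "(\<Sum>k\<in>K. (a k)^2) = (\<Sum>j\<in>(\<lambda>k. n - 2*k) ` K. (2 * t^2)^j / fact j)"
      by (subst sum.reindex) (auto simp: inj_on_def K2 a_def)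
    also have "\<dots> \<le> (\<Sum>j<Suc n. (2 * t^2)^j / fact j)"
      by (rule sum_mono2) auto
    also have "\<dots> \<le> exp (2 * t^2)" by (rule exp_partial_le) simp
    finally show "(\<Sum>k\<in>K. (a k)^2) \<le> exp (2 * t^2)" .
    have "(\<Sum>k\<in>K. (b k)^2) = (\<Sum>k\<le>n div 2. (hermite_coeff n k)^2 * (2^(n - 2*k) * fact (n - 2*k)))"
      by (simp add: b_def K_def power_mult_distrib)
    also have "\<dots> \<le> 4^n * fact n" by (rule hermite_coeff_sq_sum)
    finally show "(\<Sum>k\<in>K. (b k)^2) \<le> 4^n * fact n" .
  qed (auto intro: sum_nonneg)
  finally show ?thesis .
qed

lemma hermite_fun_sq_bound: "(hermite_fun n t)^2 \<le> 4^n * fact n"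
proof -
  have "(hermite_fun n t)^2 = exp (- (2 * t^2)) * (hermite_expl n t)^2"
    unfolding hermite_fun_expl by (simp add: power_mult_distrib exp_double[symmetric])
  also have "\<dots> \<le> exp (- (2 * t^2)) * (exp (2 * t^2) * (4^n * fact n))"
    by (intro mult_left_mono hermite_expl_sq_bound) auto
  also have "\<dots> = 4^n * fact n" by (simp add: exp_minus field_simps)
  finally show ?thesis .
qed

lemma gauss_taylor_hermite:
  "\<exists>\<tau>. exp (- ((c+u)^2)) = (\<Sum>m<N. (-1)^m * hermite_fun m c / fact m * u^m)
      + (-1)^N * hermite_fun N \<tau> / fact N * u^N"
proof -
  have shift: "DERIV (\<lambda>v. (-1)^m * hermite_fun m (c+v)) v :> (-1)^Suc m * hermite_fun (Suc m) (c+v)"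
    for m v
  proof -
    have "DERIV (\<lambda>v. hermite_fun m (v + c)) v :> - hermite_fun (Suc m) (v + c)"
      using DERIV_shift[THEN iffD1, OF hermite_fun_deriv] .
    from DERIV_cmult[OF this, of "(-1)^m"] show ?thesis by (simp add: add.commute)
  qed
  have "\<exists>t. \<bar>t\<bar> \<le> \<bar>u\<bar> \<and> exp (- ((c+u)^2)) = (\<Sum>m<N. ((-1)^m * hermite_fun m (c+0) / fact m) * u ^ m)
      + ((-1)^N * hermite_fun N (c+t) / fact N) * u ^ N"
    by (rule Maclaurin_all_le[where diff = "\<lambda>m v. (-1)^m * hermite_fun m (c+v)"])
       (use shift in \<open>auto simp: hermite_fun_0\<close>)
  then show ?thesis by auto
qed

text \<open>The Taylor remainder is bounded via the uniform Hermite function bound \<dots>\<close>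
lemma gauss_taylor_remainder:
  "\<bar>exp (- ((c+u)^2)) - (\<Sum>m<N. (-1)^m * hermite_fun m c / fact m * u^m)\<bar>
     \<le> sqrt ((4 * u^2)^N / fact N)"
proof -
  obtain \<tau> where t: "exp (- ((c+u)^2)) = (\<Sum>m<N. (-1)^m * hermite_fun m c / fact m * u^m)
      + (-1)^N * hermite_fun N \<tau> / fact N * u^N" using gauss_taylor_hermite by blast
  have "\<bar>(-1)^N * hermite_fun N \<tau> / fact N * u^N\<bar>^2 = (hermite_fun N \<tau>)^2 * (u^2)^N / (fact N)^2"
    by (simp add: power_mult_distrib power_divide flip: power_mult) (simp add: mult.commute)
  also have "\<dots> \<le> (4^N * fact N) * (u^2)^N / (fact N)^2"
    by (intro divide_right_mono mult_right_mono hermite_fun_sq_bound) auto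
  also have "\<dots> = (4 * u^2)^N / fact N"
    by (simp add: power2_eq_square power_mult_distrib)
  finally have "\<bar>(-1)^N * hermite_fun N \<tau> / fact N * u^N\<bar> \<le> sqrt ((4 * u^2)^N / fact N)"
    by (rule real_le_rsqrt)
  then show ?thesis using t by simp
qed

lemma gauss_taylor_remainder_tendsto: "(\<lambda>N. sqrt ((4 * u^2)^N / fact N)) \<longlonglongrightarrow> 0"
proof -
  have "(\<lambda>N. inverse (fact N) * (4 * u^2)^N) \<longlonglongrightarrow> (0::real)"
    by (rule summable_LIMSEQ_zero[OF summable_exp])
  then have "(\<lambda>N. (4 * u^2)^N / fact N) \<longlonglongrightarrow> (0::real)"
    by (simp add: divide_inverse mult.commute)
  from tendsto_real_sqrt[OF this] show ?thesis by simp
qed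

text \<open>One coordinate of the fast Gauss transform: expanding exp(-(c + (x - y))^2) in
  u = x - y and then binomially in y and -x gives the terms below; the truncated
  expansion keeps the powers y^a and x^b with a, b < p.\<close>
definition hermite_term :: "real \<Rightarrow> real \<Rightarrow> real \<Rightarrow> nat \<Rightarrow> nat \<Rightarrow> real" where
  "hermite_term c x y a b = hermite_fun (a+b) c * y^a * (-x)^b / (fact a * fact b)"

definition hermite_trunc :: "nat \<Rightarrow> real \<Rightarrow> real \<Rightarrow> real \<Rightarrow> real" where
  "hermite_trunc p c x y = (\<Sum>a<p. \<Sum>b<p. hermite_term c x y a b)"

text \<open>The constants of the error estimate: a bound for the truncated expansion and a
  bound for its error, both for the rescaled radius s = 2 r0.\<close>
definition trunc_sum_bound :: "nat \<Rightarrow> real \<Rightarrow> real" where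
  "trunc_sum_bound p s = (\<Sum>a<p. s^a)^2"

definition trunc_err_bound :: "nat \<Rightarrow> real \<Rightarrow> real" where
  "trunc_err_bound p s = ((1/(1-s))^2 - trunc_sum_bound p s) / sqrt (fact p)"

lemma geom_sum_le: "0 \<le> s \<Longrightarrow> s < 1 \<Longrightarrow> (\<Sum>i<N. s^i) \<le> 1 / (1 - (s::real))"
  by (simp add: sum_gp_strict divide_right_mono)

lemma trunc_err_bound_nonneg: "0 \<le> s \<Longrightarrow> s < 1 \<Longrightarrow> 0 \<le> trunc_err_bound p s"
  unfolding trunc_err_bound_def trunc_sum_bound_def
  by (intro divide_nonneg_nonneg diff_ge_0_iff_ge[THEN iffD2] power_mono geom_sum_le)
     (auto intro: sum_nonneg)

text \<open>(a+b)! <= 2^(a+b) a! b!, since the binomial coefficient is at most 2^(a+b).\<close>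
lemma fact_add_le: "(fact (a+b) :: real) \<le> 2^(a+b) * (fact a * fact b)"
proof -
  have "fact a * fact (a + b - a) * ((a+b) choose a) = fact (a+b)" by (rule binomial_fact_lemma) simp
  then have e: "(fact (a+b) :: real) = fact a * fact b * real ((a+b) choose a)"
    by (metis add_diff_cancel_left' of_nat_fact of_nat_mult)
  have "real ((a+b) choose a) \<le> 2^(a+b)"
    using binomial_le_pow2[of "a+b" a] by (metis of_nat_le_iff of_nat_numeral of_nat_power)
  then show ?thesis unfolding e by (simp add: mult_left_mono mult_ac)
qed

text \<open>Size of a single term when |x|, |y| <= r0 / sqrt 2: it decays like (2 r0)^(a+b)
  and carries the factor 1 / sqrt(a! b!) that produces the 1 / sqrt(p!) of the theorem.\<close>
lemma hermite_term_bound: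
  assumes r0: "0 \<le> r0" and x: "x^2 \<le> r0^2/2" and y: "y^2 \<le> r0^2/2"
  shows "\<bar>hermite_term c x y a b\<bar> \<le> (2*r0)^(a+b) / sqrt (fact a * fact b)"
proof -
  define F :: real where "F = fact a * fact b"
  have F0: "F > 0" by (simp add: F_def)
  have "(hermite_term c x y a b)^2 = (hermite_fun (a+b) c)^2 * ((y^2)^a * (x^2)^b) / F^2"
    unfolding hermite_term_def F_def
    by (simp add: power_mult_distrib power_divide flip: power_mult) (simp add: mult.commute)
  also have "\<dots> \<le> (4^(a+b) * fact (a+b)) * ((r0^2/2)^a * (r0^2/2)^b) / F^2"
    by (intro divide_right_mono mult_mono hermite_fun_sq_bound power_mono x y) auto
  also have "\<dots> \<le> (4^(a+b) * (2^(a+b) * F)) * ((r0^2/2)^a * (r0^2/2)^b) / F^2"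
    unfolding F_def by (intro divide_right_mono mult_right_mono mult_left_mono fact_add_le) auto
  also have "\<dots> = ((2*r0)^(a+b) / sqrt F)^2"
  proof -
    have "(4::real)^(a+b) * 2^(a+b) * ((r0^2/2)^a * (r0^2/2)^b) = (4 * 2 * (r0^2/2))^(a+b)"
      by (simp only: power_add[symmetric] power_mult_distrib)
    also have "(4 * 2 * (r0^2/2)) = (2*r0)^2" by (simp add: power2_eq_square)
    also have "((2*r0)^2)^(a+b) = ((2*r0)^(a+b))^2" by (simp only: power_mult[symmetric] mult.commute)
    finally have num: "(4::real)^(a+b) * 2^(a+b) * ((r0^2/2)^a * (r0^2/2)^b) = ((2*r0)^(a+b))^2" .
    have cancel: "X * F / F^2 = X / (sqrt F)^2" for X using F0 by (simp add: power2_eq_square)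
    have "(4^(a+b) * (2^(a+b) * F)) * ((r0^2/2)^a * (r0^2/2)^b) / F^2
        = ((4^(a+b) * 2^(a+b) * ((r0^2/2)^a * (r0^2/2)^b)) * F) / F^2" by (simp only: mult_ac)
    also have "\<dots> = ((2*r0)^(a+b))^2 / (sqrt F)^2" unfolding cancel num ..
    finally show ?thesis by (simp only: power_divide)
  qed
  finally have "(hermite_term c x y a b)^2 \<le> ((2*r0)^(a+b) / sqrt F)^2" .
  then have "\<bar>hermite_term c x y a b\<bar> \<le> \<bar>(2*r0)^(a+b) / sqrt F\<bar>" using abs_le_square_iff by blast
  then show ?thesis using r0 F0 by (simp add: F_def)
qed

lemma hermite_trunc_bound:
  assumes r0: "0 \<le> r0" and x: "x^2 \<le> r0^2/2" and y: "y^2 \<le> r0^2/2"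
  shows "\<bar>hermite_trunc p c x y\<bar> \<le> trunc_sum_bound p (2*r0)"
proof -
  have "\<bar>hermite_trunc p c x y\<bar> \<le> (\<Sum>a<p. \<Sum>b<p. \<bar>hermite_term c x y a b\<bar>)"
    unfolding hermite_trunc_def by (rule order_trans[OF sum_abs]) (intro sum_mono sum_abs)
  also have "\<dots> \<le> (\<Sum>a<p. \<Sum>b<p. (2*r0)^a * (2*r0)^b)"
  proof (intro sum_mono)
    fix a b
    have "(1::real) * 1 \<le> fact a * fact b" by (rule mult_mono) auto
    then have F1: "1 \<le> sqrt (fact a * fact b :: real)" by simp
    have "\<bar>hermite_term c x y a b\<bar> \<le> (2*r0)^(a+b) / sqrt (fact a * fact b)"
      by (rule hermite_term_bound[OF r0 x y])
    also have "\<dots> \<le> (2*r0)^(a+b)"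
      using divide_left_mono[OF F1, of "(2*r0)^(a+b)"] r0 by simp
    finally show "\<bar>hermite_term c x y a b\<bar> \<le> (2*r0)^a * (2*r0)^b" by (simp add: power_add)
  qed
  also have "\<dots> = trunc_sum_bound p (2*r0)"
    by (simp add: trunc_sum_bound_def power2_eq_square sum_product)
  finally show ?thesis .
qed

lemma gauss_partial_sum_terms:
  "(\<Sum>m<N. (-1)^m * hermite_fun m c / fact m * (x - y)^m)
     = (\<Sum>(a,b)\<in>{(a,b). a+b < N}. hermite_term c x y a b)"
proof -
  have "(-1)^m * hermite_fun m c / fact m * (x - y)^m = (\<Sum>i\<le>m. hermite_term c x y i (m - i))" for m
  proof -
    have "(-1)^m * hermite_fun m c / fact m * (x - y)^m = hermite_fun m c / fact m * (y + - x)^m"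
      by (simp add: power_mult_distrib[symmetric])
    also have "\<dots> = (\<Sum>i\<le>m. hermite_fun m c / fact m * (of_nat (m choose i) * y^i * (-x)^(m-i)))"
      by (simp only: binomial_ring sum_distrib_left)
    also have "\<dots> = (\<Sum>i\<le>m. hermite_term c x y i (m - i))"
    proof (rule sum.cong[OF refl])
      fix i assume "i \<in> {..m}"
      then have im: "i \<le> m" by simp
      have "(fact m :: real) = fact i * fact (m - i) * of_nat (m choose i)"
        using binomial_fact_lemma[OF im] by (metis of_nat_fact of_nat_mult)
      then have "of_nat (m choose i) / fact m = 1 / (fact i * fact (m - i) :: real)"
        using im by (simp add: binomial_eq_0_iff not_less)
      moreover have "hermite_fun m c / fact m * (of_nat (m choose i) * y^i * (-x)^(m-i))
          = hermite_fun m c * y^i * (-x)^(m-i) * (of_nat (m choose i) / fact m)" by simp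
      ultimately show "hermite_fun m c / fact m * (of_nat (m choose i) * y^i * (-x)^(m-i))
          = hermite_term c x y i (m - i)"
        using im by (simp add: hermite_term_def)
    qed
    finally show ?thesis .
  qed
  then have "(\<Sum>m<N. (-1)^m * hermite_fun m c / fact m * (x - y)^m)
      = (\<Sum>m<N. \<Sum>i\<le>m. hermite_term c x y i (m - i))" by simp
  also have "\<dots> = (\<Sum>(a,b)\<in>{(a,b). a+b < N}. hermite_term c x y a b)"
    by (rule sum.triangle_reindex[symmetric])
  finally show ?thesis .
qed

lemma fact_le_outside_box: "\<not> (i < p \<and> j < p) \<Longrightarrow> (fact p :: real) \<le> fact i * fact j"
proof -
  assume a: "\<not> (i < p \<and> j < p)"
  have "(fact p :: real) * 1 \<le> fact i * fact j" if "p \<le> i"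
    using that by (intro mult_mono fact_mono) auto
  moreover have "(fact p :: real) * 1 \<le> fact j * fact i" if "p \<le> j"
    using that by (intro mult_mono fact_mono) auto
  ultimately show ?thesis using a by (auto simp: mult.commute)
qed

lemma geom_square_minus_box:
  assumes s: "0 \<le> s" "s < 1" and N: "p \<le> N"
  shows "(\<Sum>(i,j)\<in>{..<N}\<times>{..<N} - {..<p}\<times>{..<p}. s^(i+j)) \<le> (1/(1-s))^2 - trunc_sum_bound p s"
proof -
  have square: "(\<Sum>(i,j)\<in>{..<M}\<times>{..<M}. s^(i+j)) = (\<Sum>i<M. s^i)^2" for M
    by (simp add: sum.cartesian_product[symmetric] power_add sum_product power2_eq_square)
  have "(\<Sum>(i,j)\<in>{..<N}\<times>{..<N} - {..<p}\<times>{..<p}. s^(i+j))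
      = (\<Sum>(i,j)\<in>{..<N}\<times>{..<N}. s^(i+j)) - (\<Sum>(i,j)\<in>{..<p}\<times>{..<p}. s^(i+j))"
    using N by (intro sum_diff) auto
  also have "\<dots> = (\<Sum>i<N. s^i)^2 - trunc_sum_bound p s"
    unfolding square trunc_sum_bound_def ..
  also have "\<dots> \<le> (1/(1-s))^2 - trunc_sum_bound p s"
    using geom_sum_le[OF s, of N] s by (intro diff_right_mono power_mono) (auto intro: sum_nonneg)
  finally show ?thesis .
qed

text \<open>Difference between a Taylor polynomial of degree N >= 2p and the truncation:
  the terms live on the triangle minus the box, each is at most s^(a+b) / sqrt(p!), and
  the sum of s^(a+b) over the full square minus the box is below trunc_err_bound.\<close>
lemma partial_sum_minus_trunc:
  assumes r0: "0 \<le> r0" "2*r0 < 1" and x: "x^2 \<le> r0^2/2" and y: "y^2 \<le> r0^2/2"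
    and N: "2*p \<le> N"
  shows "\<bar>(\<Sum>m<N. (-1)^m * hermite_fun m c / fact m * (x - y)^m) - hermite_trunc p c x y\<bar>
    \<le> trunc_err_bound p (2*r0)"
proof -
  define s where "s = 2*r0"
  define Tri where "Tri = {(i,j). i+j < N}"
  define Box where "Box = {..<p} \<times> {..<p}"
  define Sq where "Sq = {..<N} \<times> {..<N}"
  have s0: "0 \<le> s" "s < 1" using r0 by (auto simp: s_def)
  have BT: "Box \<subseteq> Tri" using N by (auto simp: Box_def Tri_def)
  have TS: "Tri \<subseteq> Sq" by (auto simp: Sq_def Tri_def)
  have fS: "finite Sq" by (simp add: Sq_def)
  have fT: "finite Tri" using finite_subset[OF TS fS] .
  have "hermite_trunc p c x y = (\<Sum>(i,j)\<in>Box. hermite_term c x y i j)"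
    unfolding hermite_trunc_def Box_def by (rule sum.cartesian_product)
  then have "(\<Sum>m<N. (-1)^m * hermite_fun m c / fact m * (x - y)^m) - hermite_trunc p c x y
      = (\<Sum>(i,j)\<in>Tri - Box. hermite_term c x y i j)"
    using sum_diff[OF fT BT, of "\<lambda>(i,j). hermite_term c x y i j"]
    unfolding gauss_partial_sum_terms Tri_def by simp
  also have "\<bar>\<dots>\<bar> \<le> (\<Sum>(i,j)\<in>Tri - Box. s^(i+j) / sqrt (fact p))"
  proof (rule order_trans[OF sum_abs], rule sum_mono)
    fix ij assume ij: "ij \<in> Tri - Box"
    obtain i j where ij': "ij = (i,j)" by force
    have nb: "\<not> (i < p \<and> j < p)" using ij ij' by (auto simp: Box_def)
    have "\<bar>hermite_term c x y i j\<bar> \<le> s^(i+j) / sqrt (fact i * fact j)"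
      unfolding s_def by (rule hermite_term_bound[OF r0(1) x y])
    also have "\<dots> \<le> s^(i+j) / sqrt (fact p)"
      using fact_le_outside_box[OF nb] s0 by (intro divide_left_mono) auto
    finally show "\<bar>case ij of (i,j) \<Rightarrow> hermite_term c x y i j\<bar> \<le> (case ij of (i,j) \<Rightarrow> s^(i+j) / sqrt (fact p))"
      using ij' by simp
  qed
  also have "\<dots> \<le> (\<Sum>(i,j)\<in>Sq - Box. s^(i+j) / sqrt (fact p))"
    using TS s0 fS by (intro sum_mono2) (auto simp: case_prod_beta)
  also have "\<dots> = (\<Sum>(i,j)\<in>Sq - Box. s^(i+j)) / sqrt (fact p)"
    by (simp add: sum_divide_distrib case_prod_beta)
  also have "\<dots> \<le> trunc_err_bound p s"
    unfolding trunc_err_bound_def Sq_def Box_def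
    using geom_square_minus_box[OF s0, of p N] N by (intro divide_right_mono) auto
  finally show ?thesis by (simp add: s_def)
qed

text \<open>One-dimensional error estimate: letting N tend to infinity, the Taylor remainder
  vanishes and only the truncation error remains.\<close>
lemma hermite_trunc_error:
  assumes r0: "0 \<le> r0" "2*r0 < 1" and x: "x^2 \<le> r0^2/2" and y: "y^2 \<le> r0^2/2"
  shows "\<bar>exp (- ((c + (x - y))^2)) - hermite_trunc p c x y\<bar> \<le> trunc_err_bound p (2*r0)"
proof -
  define B where "B = trunc_err_bound p (2*r0)"
  have le: "\<bar>exp (- ((c + (x - y))^2)) - hermite_trunc p c x y\<bar> \<le> B + sqrt ((4 * (x - y)^2)^N / fact N)"
    if "2*p \<le> N" for N
    using gauss_taylor_remainder[of c "x - y" N] partial_sum_minus_trunc[OF r0 x y that, where c = c]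
    unfolding B_def by linarith
  have "(\<lambda>N. B + sqrt ((4 * (x - y)^2)^N / fact N)) \<longlonglongrightarrow> B + 0"
    by (intro tendsto_add tendsto_const gauss_taylor_remainder_tendsto)
  then show ?thesis
    using le unfolding B_def
    by (intro tendsto_le[OF _ _ tendsto_const, of sequentially]) (auto simp: eventually_sequentially)
qed

lemma prod_diff_bound:
  assumes "finite A" "\<And>d. d \<in> A \<Longrightarrow> \<bar>E d - T d\<bar> \<le> b" "\<And>d. d \<in> A \<Longrightarrow> \<bar>T d\<bar> \<le> a"
    "0 \<le> a" "0 \<le> (b::real)"
  shows "\<bar>(\<Prod>d\<in>A. E d) - (\<Prod>d\<in>A. T d)\<bar> \<le> (a+b)^card A - a^card A"
  using assms
proof (induction A rule: finite_induct)
  case empty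
  then show ?case by simp
next
  case (insert d A)
  have IH: "\<bar>(\<Prod>d\<in>A. E d) - (\<Prod>d\<in>A. T d)\<bar> \<le> (a+b)^card A - a^card A"
    using insert by auto
  have Ed: "\<bar>E d\<bar> \<le> a + b" using insert.prems(1)[of d] insert.prems(2)[of d] by auto
  have PT: "\<bar>\<Prod>d\<in>A. T d\<bar> \<le> a^card A"
    using insert by (auto simp: abs_prod intro: order_trans[OF prod_mono[where g = "\<lambda>_. a"]])
  have "(\<Prod>d\<in>insert d A. E d) - (\<Prod>d\<in>insert d A. T d)
      = E d * ((\<Prod>d\<in>A. E d) - (\<Prod>d\<in>A. T d)) + (E d - T d) * (\<Prod>d\<in>A. T d)"
    using insert by (simp add: algebra_simps)
  then have "\<bar>(\<Prod>d\<in>insert d A. E d) - (\<Prod>d\<in>insert d A. T d)\<bar>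
      \<le> \<bar>E d\<bar> * \<bar>(\<Prod>d\<in>A. E d) - (\<Prod>d\<in>A. T d)\<bar> + \<bar>E d - T d\<bar> * \<bar>\<Prod>d\<in>A. T d\<bar>"
    by (metis abs_mult abs_triangle_ineq)
  also have "\<dots> \<le> (a+b) * ((a+b)^card A - a^card A) + b * a^card A"
    using Ed IH PT insert.prems(1)[of d] insert.prems(3,4)
    by (intro add_mono mult_mono) auto
  also have "\<dots> = (a+b)^card (insert d A) - a^card (insert d A)"
    using insert by (simp add: algebra_simps)
  finally show ?case .
qed

lemma single_source_error:
  assumes r0: "0 \<le> r0" "r0 < 1/2"
    and x: "\<And>d. d < D \<Longrightarrow> (x d)^2 \<le> r0^2/2" and y: "\<And>d. d < D \<Longrightarrow> (y d)^2 \<le> r0^2/2"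
  shows "\<bar>(\<Prod>d<D. hermite_trunc p (c d) (x d) (y d)) - (\<Prod>d<D. exp (- ((c d + (x d - y d))^2)))\<bar>
    \<le> (trunc_sum_bound p (2*r0) + trunc_err_bound p (2*r0))^D - trunc_sum_bound p (2*r0)^D"
proof -
  have "\<bar>(\<Prod>d<D. exp (- ((c d + (x d - y d))^2))) - (\<Prod>d<D. hermite_trunc p (c d) (x d) (y d))\<bar>
    \<le> (trunc_sum_bound p (2*r0) + trunc_err_bound p (2*r0))^card {..<D} - trunc_sum_bound p (2*r0)^card {..<D}"
    using r0 by (intro prod_diff_bound hermite_trunc_error hermite_trunc_bound trunc_err_bound_nonneg x y)
      (auto simp: trunc_sum_bound_def)
  then show ?thesis by (simp add: abs_minus_commute)
qed

text \<open>The closed form of the theorem: with A = (1 - s^p)^2 and B = s^p (2 - s^p) / sqrt(p!),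
  both constants carry a factor 1 / (1 - s)^2, and (A + B)^D - A^D is the binomial sum
  without its k = D term.\<close>
lemma error_closed_form:
  fixes s :: real
  assumes s: "0 \<le> s" "s < 1" and D: "D \<ge> 1"
  shows "(trunc_sum_bound p s + trunc_err_bound p s)^D - trunc_sum_bound p s^D
    = 1 / (1-s)^(2*D) * (\<Sum>k=0..D-1. real (D choose k) * ((1 - s^p)^2)^k * (s^p * (2 - s^p) / sqrt (fact p))^(D-k))"
proof -
  define A where "A = (1 - s^p)^2"
  define B where "B = s^p * (2 - s^p) / sqrt (fact p)"
  define w where "w = 1 / (1-s)^2"
  have A_eq: "trunc_sum_bound p s = A * w"
    using s by (simp add: trunc_sum_bound_def sum_gp_strict A_def w_def power_divide)
  have B_eq: "trunc_err_bound p s = B * w"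
  proof -
    have w1: "(1/(1-s))^2 = w" by (simp add: w_def power_divide)
    have a1: "1 - A = s^p*(2-s^p)" by (simp add: A_def power2_eq_square algebra_simps)
    have "((1/(1-s))^2 - A * w) / sqrt (fact p) = ((1 - A) * w) / sqrt (fact p)"
      unfolding w1 by (simp add: algebra_simps)
    also have "\<dots> = B * w" unfolding a1 B_def by simp
    finally show ?thesis unfolding trunc_err_bound_def A_eq .
  qed
  have "(A * w + B * w)^D - (A * w)^D = w^D * ((A + B)^D - A^D)"
    by (simp only: distrib_right[symmetric] power_mult_distrib right_diff_distrib mult.commute)
  also have "(A + B)^D = (\<Sum>k<Suc D. real (D choose k) * A^k * B^(D-k))"
    by (simp add: binomial_ring lessThan_Suc_atMost)
  also have "\<dots> - A^D = (\<Sum>k<D. real (D choose k) * A^k * B^(D-k))"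
    by simp
  also have "{..<D} = {0..D-1}"
    using D by auto
  also have "w^D = 1 / (1-s)^(2*D)" unfolding w_def by (simp add: power_one_over power_mult)
  finally show ?thesis unfolding A_eq B_eq A_def B_def .
qed

lemma multi_lt_prod:
  "(\<Sum>\<alpha>\<in>multi_lt D p. \<Prod>d<D. f d (\<alpha> d)) = (\<Prod>d<D. \<Sum>j<p. f d j :: real)"
proof -
  have "(\<Prod>d<D. \<Sum>j<p. f d j) = (\<Sum>g\<in>PiE {..<D} (\<lambda>_. {..<p}). \<Prod>d<D. f d (g d))"
    by (rule prod_sum_PiE) auto
  also have "\<dots> = (\<Sum>\<alpha>\<in>multi_lt D p. \<Prod>d<D. f d (\<alpha> d))"
    by (rule sum.reindex_bij_witness[where i = "\<lambda>\<alpha>. restrict \<alpha> {..<D}"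
          and j = "\<lambda>g d. if d < D then g d else 0"])
       (auto simp: multi_lt_def PiE_def extensional_def fun_eq_iff intro!: prod.cong)
  finally show ?thesis ..
qed

lemma multi_term_factor:
  "((-1)^mabs D \<beta> / real (mfact D \<beta>)) * ((1 / real (mfact D \<alpha>)) * mpow D y \<alpha>)
     * mhermite D (\<lambda>d. \<alpha> d + \<beta> d) c * mpow D x \<beta>
   = (\<Prod>d<D. hermite_term (c d) (x d) (y d) (\<alpha> d) (\<beta> d))"
proof -
  have factorwise: "hermite_term c' x' y' a b = ((-1)^b / fact b) * ((1 / fact a) * y'^a) * hermite_fun (a+b) c' * x'^b"
    for c' x' y' a b
    by (simp add: hermite_term_def power_minus[of x' b] mult_ac)
  have "(\<Prod>d<D. hermite_term (c d) (x d) (y d) (\<alpha> d) (\<beta> d))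
     = (\<Prod>d<D. (-1)^(\<beta> d) / fact (\<beta> d)) * ((\<Prod>d<D. 1 / fact (\<alpha> d)) * (\<Prod>d<D. (y d)^(\<alpha> d)))
      * (\<Prod>d<D. hermite_fun (\<alpha> d + \<beta> d) (c d)) * (\<Prod>d<D. (x d)^(\<beta> d))"
    by (simp only: factorwise prod.distrib)
  also have "(\<Prod>d<D. (-1)^(\<beta> d) / fact (\<beta> d)) = (-1)^mabs D \<beta> / real (mfact D \<beta>)"
    by (simp add: prod_dividef mabs_def mfact_def power_sum of_nat_prod)
  also have "(\<Prod>d<D. 1 / fact (\<alpha> d)) = 1 / real (mfact D \<alpha>)"
    by (simp add: prod_dividef mfact_def of_nat_prod)
  finally show ?thesis by (simp add: mpow_def mhermite_def)
qed

lemma G_approx_factor: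
  "G_approx D p h R cR cQ q
     = (\<Sum>r\<in>R. \<Prod>d<D. hermite_trunc p (scaled h cQ cR d) (scaled h q cQ d) (scaled h r cR d))"
proof -
  define c where "c = scaled h cQ cR"
  define x where "x = scaled h q cQ"
  define y where "y r = scaled h r cR" for r
  define M where "M = multi_lt D p"
  define g where "g r \<alpha> \<beta> = (\<Prod>d<D. hermite_term (c d) (x d) (y r d) (\<alpha> d) (\<beta> d))" for r \<alpha> \<beta>
  have "G_approx D p h R cR cQ q = (\<Sum>\<beta>\<in>M. \<Sum>\<alpha>\<in>M. \<Sum>r\<in>R.
        ((-1)^mabs D \<beta> / real (mfact D \<beta>)) * ((1 / real (mfact D \<alpha>)) * mpow D (y r) \<alpha>)
          * mhermite D (\<lambda>d. \<alpha> d + \<beta> d) c * mpow D x \<beta>)"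
    unfolding G_approx_def local_moment_def farfield_moment_def M_def c_def x_def y_def
    by (simp add: sum_distrib_left sum_distrib_right mult_ac)
  also have "\<dots> = (\<Sum>\<beta>\<in>M. \<Sum>\<alpha>\<in>M. \<Sum>r\<in>R. g r \<alpha> \<beta>)"
    by (simp only: multi_term_factor g_def)
  also have "\<dots> = (\<Sum>\<beta>\<in>M. \<Sum>r\<in>R. \<Sum>\<alpha>\<in>M. g r \<alpha> \<beta>)"
    by (rule sum.cong[OF refl], rule sum.swap)
  also have "\<dots> = (\<Sum>r\<in>R. \<Sum>\<beta>\<in>M. \<Sum>\<alpha>\<in>M. g r \<alpha> \<beta>)"
    by (rule sum.swap)
  also have "\<dots> = (\<Sum>r\<in>R. \<Sum>\<alpha>\<in>M. \<Sum>\<beta>\<in>M. g r \<alpha> \<beta>)"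
    by (rule sum.cong[OF refl], rule sum.swap)
  also have "\<dots> = (\<Sum>r\<in>R. \<Sum>\<alpha>\<in>M. \<Prod>d<D. \<Sum>b<p. hermite_term (c d) (x d) (y r d) (\<alpha> d) b)"
    unfolding g_def M_def
    by (intro sum.cong refl multi_lt_prod[of "\<lambda>d b. hermite_term (c d) (x d) (y _ d) (_ d) b"])
  also have "\<dots> = (\<Sum>r\<in>R. \<Prod>d<D. \<Sum>a<p. \<Sum>b<p. hermite_term (c d) (x d) (y r d) a b)"
    unfolding M_def
    by (intro sum.cong refl multi_lt_prod[of "\<lambda>d a. \<Sum>b<p. hermite_term (c d) (x d) (y _ d) a b"])
  finally show ?thesis by (simp add: hermite_trunc_def c_def x_def y_def)
qed

lemma G_exact_factor:
  assumes h: "h > 0"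
  shows "G_exact D h R q
    = (\<Sum>r\<in>R. \<Prod>d<D. exp (- ((scaled h cQ cR d + (scaled h q cQ d - scaled h r cR d))^2)))"
  unfolding G_exact_def
proof (rule sum.cong[OF refl])
  fix r
  define S where "S = sqrt (2 * h^2)"
  have SS: "S^2 = 2 * h^2" using h by (simp add: S_def)
  have "- ((eucl_norm D (\<lambda>d. q d - r d))^2) / (2 * h^2) = (\<Sum>d<D. - ((q d - r d)^2 / (2 * h^2)))"
    unfolding eucl_norm_def by (simp add: sum_nonneg sum_divide_distrib sum_negf)
  moreover have "(q d - r d)^2 / (2 * h^2) = (scaled h cQ cR d + (scaled h q cQ d - scaled h r cR d))^2" for d
  proof -
    have "scaled h cQ cR d + (scaled h q cQ d - scaled h r cR d) = (q d - r d) / S"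
      unfolding scaled_def S_def[symmetric] by (simp add: diff_divide_distrib add_divide_distrib)
    then show ?thesis using SS by (simp add: power_divide)
  qed
  ultimately show "exp (- ((eucl_norm D (\<lambda>d. q d - r d))^2) / (2 * h^2))
      = (\<Prod>d<D. exp (- ((scaled h cQ cR d + (scaled h q cQ d - scaled h r cR d))^2)))"
    by (simp add: exp_sum)
qed

lemma scaled_coord_sq_bound:
  assumes h: "h > 0" and v: "max_norm D (\<lambda>d. v d - w d) < r0 * h" and d: "d < D"
  shows "(scaled h v w d)^2 \<le> r0^2/2"
proof -
  have "\<bar>v d - w d\<bar> \<le> max_norm D (\<lambda>d. v d - w d)"
    unfolding max_norm_def using d by (intro Max_ge) auto
  then have "\<bar>v d - w d\<bar> \<le> r0 * h" using v by simp
  then have "(v d - w d)^2 \<le> (r0 * h)^2"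
    using power_mono[of "\<bar>v d - w d\<bar>" "r0 * h" 2] by simp
  then have "(v d - w d)^2 / (2 * h^2) \<le> (r0 * h)^2 / (2 * h^2)"
    by (rule divide_right_mono) simp
  also have "(r0 * h)^2 / (2 * h^2) = r0^2/2" using h by (simp add: power_mult_distrib)
  finally show ?thesis unfolding scaled_def using h by (simp add: power_divide)
qed

theorem mainTheorem2:
  fixes D p :: nat and h r0 :: real
    and Q R :: "(nat \<Rightarrow> real) set" and cQ cR :: "nat \<Rightarrow> real"
  assumes "D \<ge> 1" and "p \<ge> 1" and "h > 0"
    and "finite Q" and "finite R"
    and "\<forall>q\<in>Q. \<forall>d\<ge>D. q d = 0" and "\<forall>r\<in>R. \<forall>d\<ge>D. r d = 0"
    and "\<forall>d\<ge>D. cQ d = 0" and "\<forall>d\<ge>D. cR d = 0"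
    and "0 \<le> r0" and "r0 < 1/2"
    and "\<forall>q\<in>Q. max_norm D (\<lambda>d. q d - cQ d) < r0 * h"
    and "\<forall>r\<in>R. max_norm D (\<lambda>d. r d - cR d) < r0 * h"
  shows "\<forall>q\<in>Q. \<bar>G_approx D p h R cR cQ q - G_exact D h R q\<bar> \<le>
    real (card R) / (1 - 2*r0) ^ (2*D) *
    (\<Sum>k=0..D-1. real (D choose k) * ((1 - (2*r0)^p)^2)^k *
       ((2*r0)^p * (2 - (2*r0)^p) / sqrt (fact p)) ^ (D - k))"
proof
  fix q assume q: "q \<in> Q"
  define A where "A = trunc_sum_bound p (2*r0)"
  define B where "B = trunc_err_bound p (2*r0)"
  have "\<bar>G_approx D p h R cR cQ q - G_exact D h R q\<bar>
     \<le> (\<Sum>r\<in>R. \<bar>(\<Prod>d<D. hermite_trunc p (scaled h cQ cR d) (scaled h q cQ d) (scaled h r cR d))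
                 - (\<Prod>d<D. exp (- ((scaled h cQ cR d + (scaled h q cQ d - scaled h r cR d))^2)))\<bar>)"
    unfolding G_approx_factor G_exact_factor[OF assms(3), where cQ = cQ and cR = cR] sum_subtractf[symmetric] by (rule sum_abs)
  also have "\<dots> \<le> (\<Sum>r\<in>R. (A + B)^D - A^D)"
    using assms(3,10-13) q unfolding A_def B_def
    by (intro sum_mono single_source_error scaled_coord_sq_bound) auto
  also have "\<dots> = real (card R) * ((A + B)^D - A^D)" by simp
  also have "(A + B)^D - A^D = 1 / (1 - 2*r0)^(2*D) * (\<Sum>k=0..D-1. real (D choose k)
      * ((1 - (2*r0)^p)^2)^k * ((2*r0)^p * (2 - (2*r0)^p) / sqrt (fact p))^(D-k))"
    unfolding A_def B_def using assms(1,10,11) by (intro error_closed_form) auto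
  finally show "\<bar>G_approx D p h R cR cQ q - G_exact D h R q\<bar> \<le> real (card R) / (1 - 2*r0) ^ (2*D) *
    (\<Sum>k=0..D-1. real (D choose k) * ((1 - (2*r0)^p)^2)^k *
       ((2*r0)^p * (2 - (2*r0)^p) / sqrt (fact p)) ^ (D - k))" by simp
qed

end
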